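(* Let $\Sigma$ be a finite alphabet and $C:\Sigma^k\to\Sigma^n$ a $(q,\delta,1,s)$-relaxed locally decodable code whose relaxed decoder is nonadaptive of the following form: for each $i\in[k]$ there is a distribution $\mathcal{Q}_i$ over $q$-element subsets of $[n]$ and for each $Q\in\mathrm{supp}(\mathcal{Q}_i)$ a function $f_{i,Q}:\Sigma^Q\to\Sigma\cup\{\bot\}$; on input $y$ and $i$ it samples $Q\sim\mathcal{Q}_i$ and outputs $f_{i,Q}(y|_Q)$. Fix $i\in[k]$ and a codeword $c=C(b)$. Let $c'\in\Sigma^n$ be the random word with $c'_j=c_j$ for $j\in L_i$ and $c'_j$ an independent uniformly random symbol of $\Sigma$ for $j\in H_i$. Then for every $(i,c)$-nonsmoothable query set $Q\in\mathrm{supp}(\mathcal{Q}_i)$, \[ \Pr_{c'}\bigl[f_{i,Q}(c'|_Q)\notin\{b_i,\bot\}\bigr]\ \ge\ |\Sigma|^{-|H(Q)|}\ \ge\ |\Sigma|^{-q}, \] where $H(Q):=Q\cap H_i$.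
   Context: $C$ is a $(q,\delta,1,s)$-RLDC if the decoder (outputs in $\Sigma\cup\{\bot\}$) satisfies, for all $b\in\Sigma^k$, $i\in[k]$, $y\in\Sigma^n$ with Hamming distance $\Delta(y,C(b))\le\delta n$: $\Pr[\mathsf{Dec}^{C(b)}(i)=b_i]=1$ and $\Pr[\mathsf{Dec}^y(i)\notin\{b_i,\bot\}]\le s$. $x|_S$ is the restriction of $x$ to coordinates in $S$. $p_i(j):=\Pr_{Q\sim\mathcal{Q}_i}[j\in Q]$, $H_i:=\{j:p_i(j)>q/(\delta n)\}$, $L_i:=[n]\setminus H_i$, $L(Q):=Q\cap L_i$. $Q$ is $(i,c)$-nonsmoothable if there exists $b'\in\Sigma^k$ with $C(b')|_{L(Q)}=c|_{L(Q)}$ and $b'_i\ne b_i$. *)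

theory Defs
  imports "HOL-Probability.Probability"
begin

(* Alphabet Sigma = finite type 'a; messages Sigma^k = 'k => 'a, words Sigma^n = 'n => 'a
   with 'k, 'n finite index types (k = CARD('k), n = CARD('n)).
   Output bottom is None, a symbol sigma is Some sigma. *)

definition hamming :: "('n \<Rightarrow> 'a) \<Rightarrow> ('n \<Rightarrow> 'a) \<Rightarrow> nat" where
  "hamming x y = card {j. x j \<noteq> y j}"

definition dec_dist ::
  "('k \<Rightarrow> 'n set pmf) \<Rightarrow> ('k \<Rightarrow> 'n set \<Rightarrow> ('n \<Rightarrow> 'a) \<Rightarrow> 'a option)
     \<Rightarrow> ('n \<Rightarrow> 'a) \<Rightarrow> 'k \<Rightarrow> 'a option pmf" where
  "dec_dist Qd f y i = map_pmf (\<lambda>Q. f i Q (restrict y Q)) (Qd i)"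

definition is_RLDC ::
  "(('k::finite \<Rightarrow> 'a) \<Rightarrow> ('n::finite \<Rightarrow> 'a)) \<Rightarrow> ('k \<Rightarrow> 'n set pmf)
     \<Rightarrow> ('k \<Rightarrow> 'n set \<Rightarrow> ('n \<Rightarrow> 'a) \<Rightarrow> 'a option) \<Rightarrow> nat \<Rightarrow> real \<Rightarrow> real \<Rightarrow> bool" where
  "is_RLDC C Qd f q \<delta> s \<longleftrightarrow>
     (\<forall>i. \<forall>Q \<in> set_pmf (Qd i). card Q = q) \<and>
     (\<forall>b i y. real (hamming y (C b)) \<le> \<delta> * real CARD('n) \<longrightarrow>
        measure_pmf.prob (dec_dist Qd f (C b) i) {Some (b i)} = 1 \<and>
        measure_pmf.prob (dec_dist Qd f y i) (- {Some (b i), None}) \<le> s)"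

definition query_prob :: "('k \<Rightarrow> 'n set pmf) \<Rightarrow> 'k \<Rightarrow> 'n \<Rightarrow> real" where
  "query_prob Qd i j = measure_pmf.prob (Qd i) {Q. j \<in> Q}"

definition heavy :: "('k \<Rightarrow> 'n::finite set pmf) \<Rightarrow> nat \<Rightarrow> real \<Rightarrow> 'k \<Rightarrow> 'n set" where
  "heavy Qd q \<delta> i = {j. query_prob Qd i j > real q / (\<delta> * real CARD('n))}"

definition light :: "('k \<Rightarrow> 'n::finite set pmf) \<Rightarrow> nat \<Rightarrow> real \<Rightarrow> 'k \<Rightarrow> 'n set" where
  "light Qd q \<delta> i = UNIV - heavy Qd q \<delta> i"

definition nonsmoothable ::
  "(('k \<Rightarrow> 'a) \<Rightarrow> ('n::finite \<Rightarrow> 'a)) \<Rightarrow> ('k \<Rightarrow> 'n set pmf) \<Rightarrow> nat \<Rightarrow> real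
     \<Rightarrow> 'k \<Rightarrow> ('k \<Rightarrow> 'a) \<Rightarrow> 'n set \<Rightarrow> bool" where
  "nonsmoothable C Qd q \<delta> i b Q \<longleftrightarrow>
     (\<exists>b'. (\<forall>j \<in> Q \<inter> light Qd q \<delta> i. C b' j = C b j) \<and> b' i \<noteq> b i)"

definition rerandomize :: "'n::finite set \<Rightarrow> ('n \<Rightarrow> 'a::finite) \<Rightarrow> ('n \<Rightarrow> 'a) pmf" where
  "rerandomize H c =
     map_pmf (\<lambda>g j. if j \<in> H then g j else c j)
       (Pi_pmf H undefined (\<lambda>_. pmf_of_set (UNIV :: 'a set)))"

end

theory Submission
  imports Defs
begin

(* The decoder never errs on a codeword, so it returns b' i whenever it reads a view Q of
   the codeword C b'. Nonsmoothability provides such a b' with b' i different from b i whose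
   codeword agrees with C b on the light part of Q; rerandomizing the heavy positions
   reproduces the view of C b' with probability exactly |Sigma|^-|H(Q)|. *)

lemma RLDC_decodes_codeword:
  assumes "is_RLDC C Qd f q \<delta> s" "\<delta> \<ge> 0" "Q \<in> set_pmf (Qd i)"
  shows "f i Q (restrict (C b) Q) = Some (b i)"
proof -
  have "real (hamming (C b) (C b)) \<le> \<delta> * real CARD('n)"
    using assms(2) by (simp add: hamming_def)
  then have "measure_pmf.prob (dec_dist Qd f (C b) i) {Some (b i)} = 1"
    using assms(1) unfolding is_RLDC_def by blast
  then have "\<forall>y \<in> set_pmf (dec_dist Qd f (C b) i). y = Some (b i)"
    by (simp add: measure_pmf.prob_eq_1 AE_measure_pmf_iff)
  then show ?thesis
    using assms(3) by (simp add: dec_dist_def)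
qed

lemma prob_rerandomize_restrict_eq:
  fixes c w :: "'n::finite \<Rightarrow> 'a::finite"
  assumes "\<And>j. j \<in> Q - H \<Longrightarrow> w j = c j"
  shows "measure_pmf.prob (rerandomize H c) {c'. restrict c' Q = restrict w Q}
           = 1 / real CARD('a) ^ card (Q \<inter> H)"
proof -
  define B where "B x = (if x \<in> Q then {w x} else UNIV)" for x
  have preimage: "(\<lambda>g j. if j \<in> H then g j else c j) -` {c'. restrict c' Q = restrict w Q}
      = Pi H B"
    using assms by (auto simp: B_def Pi_def restrict_def fun_eq_iff)
  have "measure_pmf.prob (rerandomize H c) {c'. restrict c' Q = restrict w Q}
      = (\<Prod>x\<in>H. measure_pmf.prob (pmf_of_set (UNIV :: 'a set)) (B x))"
    unfolding rerandomize_def measure_map_pmf preimage by (rule measure_Pi_pmf_Pi) simp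
  also have "\<dots> = (\<Prod>x\<in>H. if x \<in> Q then 1 / real CARD('a) else 1)"
    by (intro prod.cong) (auto simp: B_def measure_pmf_of_set)
  also have "\<dots> = (\<Prod>x\<in>H \<inter> Q. 1 / real CARD('a))"
    by (simp add: prod.If_cases Int_commute)
  finally show ?thesis
    by (simp add: Int_commute power_one_over)
qed

theorem mainTheorem4:
  fixes C :: "('k::finite \<Rightarrow> 'a::finite) \<Rightarrow> ('n::finite \<Rightarrow> 'a)"
    and Qd :: "'k \<Rightarrow> 'n set pmf"
    and f :: "'k \<Rightarrow> 'n set \<Rightarrow> ('n \<Rightarrow> 'a) \<Rightarrow> 'a option"
    and q :: nat and \<delta> s :: real and i :: 'k and b :: "'k \<Rightarrow> 'a" and Q :: "'n set"
  assumes "\<delta> > 0"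
    and "is_RLDC C Qd f q \<delta> s"
    and "Q \<in> set_pmf (Qd i)"
    and "nonsmoothable C Qd q \<delta> i b Q"
  shows "measure_pmf.prob (rerandomize (heavy Qd q \<delta> i) (C b))
           {c'. f i Q (restrict c' Q) \<notin> {Some (b i), None}}
         \<ge> 1 / real CARD('a) ^ card (Q \<inter> heavy Qd q \<delta> i)
       \<and> 1 / real CARD('a) ^ card (Q \<inter> heavy Qd q \<delta> i) \<ge> 1 / real CARD('a) ^ q"
proof
  let ?H = "heavy Qd q \<delta> i"
  obtain b' where agree: "\<And>j. j \<in> Q - ?H \<Longrightarrow> C b' j = C b j" and "b' i \<noteq> b i"
    using assms(4) by (auto simp: nonsmoothable_def light_def)
  have "f i Q (restrict (C b') Q) = Some (b' i)"
    using RLDC_decodes_codeword assms(1-3) by (metis less_imp_le)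
  with \<open>b' i \<noteq> b i\<close> have view_of_C_b': "{c'. restrict c' Q = restrict (C b') Q}
      \<subseteq> {c'. f i Q (restrict c' Q) \<notin> {Some (b i), None}}"
    by auto
  have "1 / real CARD('a) ^ card (Q \<inter> ?H)
      = measure_pmf.prob (rerandomize ?H (C b)) {c'. restrict c' Q = restrict (C b') Q}"
    using agree by (rule prob_rerandomize_restrict_eq[symmetric])
  also have "\<dots> \<le> measure_pmf.prob (rerandomize ?H (C b))
      {c'. f i Q (restrict c' Q) \<notin> {Some (b i), None}}"
    using view_of_C_b' by (intro measure_pmf.finite_measure_mono) auto
  finally show "measure_pmf.prob (rerandomize ?H (C b))
      {c'. f i Q (restrict c' Q) \<notin> {Some (b i), None}} \<ge> 1 / real CARD('a) ^ card (Q \<inter> ?H)" .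
  have "card (Q \<inter> ?H) \<le> q"
    using assms(2,3) unfolding is_RLDC_def by (metis Int_lower1 card_mono finite)
  then show "1 / real CARD('a) ^ card (Q \<inter> ?H) \<ge> 1 / real CARD('a) ^ q"
    by (intro divide_left_mono power_increasing) auto
qed

end
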